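(* Let $n$ be sufficiently large, $m=\lceil n/\log^8 n\rceil$ and $p=1/(m^{1/2}\log^2 m)$. Let $H_R,H_B$ be graphs on vertex set $[m]$, let $H_R',H_B'$ be obtained from them by deleting every edge lying in a triangle, and let $\pi_R,\pi_B:[n]\to[m]$ be maps. Let $H_0$ be the graph on $[n]$ where distinct $u,v$ are adjacent iff $\{\pi_R(u),\pi_R(v)\}\in E(H_R')$ (then the edge is called red) or $\{\pi_B(u),\pi_B(v)\}\in E(H_B')$ (then called blue); an edge may be both. A pair $\{u,v\}\in\binom{[n]}{2}$ is closed by a red (resp. blue) cherry if there is $w\in[n]$ with $\{u,w\},\{v,w\}$ both red (resp. both blue) edges of $H_0$. If $H_R$ has maximum degree at most $2pm$ and $|\pi_R^{-1}(x)|\le 2n/m$ for all $x\in[m]$, then at most $n^2/\log n$ pairs in $\binom{[n]}2$ are closed by a red cherry in $H_0$. Similarly, if $H_B$ has maximum degree at most $2pm$ and $|\pi_B^{-1}(x)|\le 2n/m$ for all $x\in[m]$, then at most $n^2/\log n$ pairs are closed by a blue cherry in $H_0$.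
   Context: Logarithms are natural; $\log^k n$ means $(\log n)^k$. *)

theory Defs
  imports Complex_Main
begin

definition is_graph_on :: "nat \<Rightarrow> nat set set \<Rightarrow> bool" where
  "is_graph_on m H \<longleftrightarrow> (\<forall>e\<in>H. e \<subseteq> {1..m} \<and> card e = 2)"

definition triangle_pruned :: "nat set set \<Rightarrow> nat set set" where
  "triangle_pruned H = {e \<in> H. \<not> (\<exists>a b c. e = {a, b} \<and> {a, c} \<in> H \<and> {b, c} \<in> H)}"

definition max_degree_le :: "nat \<Rightarrow> nat set set \<Rightarrow> real \<Rightarrow> bool" where
  "max_degree_le m H d \<longleftrightarrow> (\<forall>x\<in>{1..m}. real (card {y. {x, y} \<in> H}) \<le> d)"

definition col_edge :: "nat \<Rightarrow> nat set set \<Rightarrow> (nat \<Rightarrow> nat) \<Rightarrow> nat \<Rightarrow> nat \<Rightarrow> bool" where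
  "col_edge n H \<pi> u v \<longleftrightarrow> u \<in> {1..n} \<and> v \<in> {1..n} \<and> u \<noteq> v \<and> {\<pi> u, \<pi> v} \<in> triangle_pruned H"

definition cherry_closed_pairs :: "nat \<Rightarrow> nat set set \<Rightarrow> (nat \<Rightarrow> nat) \<Rightarrow> nat set set" where
  "cherry_closed_pairs n H \<pi> =
     {P. \<exists>u v. P = {u, v} \<and> u \<in> {1..n} \<and> v \<in> {1..n} \<and> u \<noteq> v \<and>
            (\<exists>w\<in>{1..n}. col_edge n H \<pi> u w \<and> col_edge n H \<pi> v w)}"

end

theory Submission
  imports Defs "HOL-Real_Asymp.Real_Asymp"
begin

text \<open>
  If \<open>{u, v}\<close> is closed by a cherry through \<open>w\<close>, then \<open>\<pi> u\<close> and \<open>\<pi> v\<close> are both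
  neighbours of \<open>c = \<pi> w\<close> in \<open>H\<close> (triangle pruning only removes edges, so it can be
  ignored). Hence the number of closed pairs is at most the sum over \<open>c \<in> [m]\<close> of
  the squared number of vertices mapped into the neighbourhood of \<open>c\<close>, which is at
  most \<open>m (\<Delta> f)\<^sup>2\<close> when \<open>\<Delta>\<close> bounds the degrees of \<open>H\<close> and \<open>f\<close> the fibres of \<open>\<pi>\<close>.
  For \<open>\<Delta> = 2pm = 2 \<surd>m / ln\<^sup>2 m\<close> and \<open>f = 2n/m\<close> this is \<open>16 n\<^sup>2 / ln\<^sup>4 m\<close>, and
  \<open>ln m \<sim> ln n\<close> makes this at most \<open>n\<^sup>2 / ln n\<close>.
\<close>

definition preimage_nbhd :: "nat \<Rightarrow> nat set set \<Rightarrow> (nat \<Rightarrow> nat) \<Rightarrow> nat \<Rightarrow> nat set" where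
  "preimage_nbhd n H \<pi> c = {u \<in> {1..n}. {\<pi> u, c} \<in> H}"

lemma cherry_closed_pairs_subset_UN:
  assumes "\<pi> ` {1..n} \<subseteq> {1..m}"
  shows "cherry_closed_pairs n H \<pi> \<subseteq>
    (\<Union>c\<in>{1..m}. (\<lambda>(u, v). {u, v}) ` (preimage_nbhd n H \<pi> c \<times> preimage_nbhd n H \<pi> c))"
proof
  fix P assume "P \<in> cherry_closed_pairs n H \<pi>"
  then obtain u v w where P: "P = {u, v}" and w: "w \<in> {1..n}"
    and "col_edge n H \<pi> u w" "col_edge n H \<pi> v w"
    unfolding cherry_closed_pairs_def by blast
  then have "u \<in> preimage_nbhd n H \<pi> (\<pi> w)" "v \<in> preimage_nbhd n H \<pi> (\<pi> w)"
    by (auto simp: col_edge_def triangle_pruned_def preimage_nbhd_def)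
  moreover have "\<pi> w \<in> {1..m}" using w assms by blast
  ultimately show
      "P \<in> (\<Union>c\<in>{1..m}. (\<lambda>(u, v). {u, v}) ` (preimage_nbhd n H \<pi> c \<times> preimage_nbhd n H \<pi> c))"
    using P by blast
qed

lemma card_cherry_closed_pairs_le_sum:
  assumes "\<pi> ` {1..n} \<subseteq> {1..m}"
  shows "card (cherry_closed_pairs n H \<pi>) \<le> (\<Sum>c\<in>{1..m}. card (preimage_nbhd n H \<pi> c) ^ 2)"
proof -
  have fin: "finite (preimage_nbhd n H \<pi> c)" for c
    by (simp add: preimage_nbhd_def)
  have "card (cherry_closed_pairs n H \<pi>) \<le>
      card (\<Union>c\<in>{1..m}. (\<lambda>(u, v). {u, v}) ` (preimage_nbhd n H \<pi> c \<times> preimage_nbhd n H \<pi> c))"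
    using cherry_closed_pairs_subset_UN[OF assms] fin by (intro card_mono) auto
  also have "\<dots> \<le> (\<Sum>c\<in>{1..m}.
      card ((\<lambda>(u, v). {u, v}) ` (preimage_nbhd n H \<pi> c \<times> preimage_nbhd n H \<pi> c)))"
    by (rule card_UN_le) simp
  also have "\<dots> \<le> (\<Sum>c\<in>{1..m}. card (preimage_nbhd n H \<pi> c \<times> preimage_nbhd n H \<pi> c))"
    by (intro sum_mono card_image_le) (simp add: fin)
  also have "\<dots> = (\<Sum>c\<in>{1..m}. card (preimage_nbhd n H \<pi> c) ^ 2)"
    by (simp add: card_cartesian_product power2_eq_square)
  finally show ?thesis .
qed

lemma card_preimage_nbhd_le:
  assumes "is_graph_on m H"
    and "real (card {y. {c, y} \<in> H}) \<le> d"
    and "\<forall>x\<in>{1..m}. real (card {u\<in>{1..n}. \<pi> u = x}) \<le> f" and "0 \<le> f"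
  shows "real (card (preimage_nbhd n H \<pi> c)) \<le> d * f"
proof -
  define N where "N = {y. {c, y} \<in> H}"
  have N_sub: "N \<subseteq> {1..m}"
    using assms(1) by (auto simp: N_def is_graph_on_def)
  then have "finite N" by (rule finite_subset) simp
  have "preimage_nbhd n H \<pi> c = (\<Union>a\<in>N. {u\<in>{1..n}. \<pi> u = a})"
    by (auto simp: preimage_nbhd_def N_def insert_commute)
  then have "card (preimage_nbhd n H \<pi> c) \<le> (\<Sum>a\<in>N. card {u\<in>{1..n}. \<pi> u = a})"
    by (simp add: card_UN_le \<open>finite N\<close>)
  then have "real (card (preimage_nbhd n H \<pi> c)) \<le> (\<Sum>a\<in>N. real (card {u\<in>{1..n}. \<pi> u = a}))"
    by (metis of_nat_le_iff of_nat_sum)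
  also have "\<dots> \<le> (\<Sum>a\<in>N. f)"
    using assms(3) N_sub by (intro sum_mono) auto
  also have "\<dots> = real (card N) * f"
    by simp
  also have "\<dots> \<le> d * f"
    using assms(2) \<open>0 \<le> f\<close> by (simp add: N_def mult_right_mono)
  finally show ?thesis .
qed

lemma card_cherry_closed_pairs_le_degree_fibre:
  assumes "is_graph_on m H" and "\<pi> ` {1..n} \<subseteq> {1..m}"
    and "max_degree_le m H d"
    and "\<forall>x\<in>{1..m}. real (card {u\<in>{1..n}. \<pi> u = x}) \<le> f" and "0 \<le> f"
  shows "real (card (cherry_closed_pairs n H \<pi>)) \<le> real m * (d * f) ^ 2"
proof -
  have "card (cherry_closed_pairs n H \<pi>) \<le> (\<Sum>c\<in>{1..m}. card (preimage_nbhd n H \<pi> c) ^ 2)"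
    using card_cherry_closed_pairs_le_sum[OF assms(2)] .
  then have "real (card (cherry_closed_pairs n H \<pi>)) \<le>
      real (\<Sum>c\<in>{1..m}. card (preimage_nbhd n H \<pi> c) ^ 2)"
    by (simp only: of_nat_le_iff)
  also have "\<dots> = (\<Sum>c\<in>{1..m}. real (card (preimage_nbhd n H \<pi> c)) ^ 2)"
    by simp
  also have "\<dots> \<le> (\<Sum>c\<in>{1..m}. (d * f) ^ 2)"
  proof (intro sum_mono power_mono)
    fix c assume "c \<in> {1..m}"
    then show "real (card (preimage_nbhd n H \<pi> c)) \<le> d * f"
      using assms by (intro card_preimage_nbhd_le[of m]) (auto simp: max_degree_le_def)
  qed simp
  also have "\<dots> = real m * (d * f) ^ 2"
    by simp
  finally show ?thesis .
qed

lemma eventually_ln_bounds: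
  "eventually (\<lambda>x::real. 1 < x / ln x ^ 8 \<and> 16 * ln x \<le> ln (x / ln x ^ 8) ^ 4) at_top"
proof (intro eventually_conj)
  show "eventually (\<lambda>x::real. 1 < x / ln x ^ 8) at_top" by real_asymp
  show "eventually (\<lambda>x::real. 16 * ln x \<le> ln (x / ln x ^ 8) ^ 4) at_top" by real_asymp
qed

lemma card_cherry_closed_pairs_le_sq_div_ln:
  fixes n m :: nat and p :: real
  assumes n_large: "1 < real n / ln (real n) ^ 8"
      "16 * ln (real n) \<le> ln (real n / ln (real n) ^ 8) ^ 4"
    and m_def: "m = nat \<lceil>real n / ln (real n) ^ 8\<rceil>"
    and p_def: "p = 1 / (sqrt (real m) * ln (real m) ^ 2)"
    and "is_graph_on m H" and "\<pi> ` {1..n} \<subseteq> {1..m}"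
    and "max_degree_le m H (2 * p * real m)"
    and "\<forall>x\<in>{1..m}. real (card {u\<in>{1..n}. \<pi> u = x}) \<le> 2 * real n / real m"
  shows "real (card (cherry_closed_pairs n H \<pi>)) \<le> (real n)^2 / ln (real n)"
proof -
  have m_ge: "real n / ln (real n) ^ 8 \<le> real m"
    unfolding m_def by (rule real_nat_ceiling_ge)
  have ln_m: "0 \<le> ln (real n / ln (real n) ^ 8)" "ln (real n / ln (real n) ^ 8) \<le> ln (real m)"
    using n_large(1) m_ge by simp_all
  have "1 < real m" "0 < ln (real m)"
    using m_ge n_large(1) by simp_all
  have "1 < real n"
    using n_large(1) by (cases "n \<le> 1") (auto simp: le_Suc_eq)
  then have "0 < ln (real n)" by simp
  have "real (card (cherry_closed_pairs n H \<pi>)) \<le>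
      real m * (2 * p * real m * (2 * real n / real m)) ^ 2"
    using assms(5-) \<open>1 < real m\<close> by (intro card_cherry_closed_pairs_le_degree_fibre) auto
  also have "\<dots> = (real n)^2 / (ln (real m) ^ 4 / 16)"
    using \<open>1 < real m\<close> \<open>0 < ln (real m)\<close>
    by (simp add: p_def field_simps power2_eq_square eval_nat_numeral)
  also have "\<dots> \<le> (real n)^2 / ln (real n)"
  proof (rule divide_left_mono)
    have "16 * ln (real n) \<le> ln (real m) ^ 4"
      using n_large(2) power_mono[OF ln_m(2,1), of 4] by linarith
    then show "ln (real n) \<le> ln (real m) ^ 4 / 16" by simp
  qed (use \<open>0 < ln (real n)\<close> \<open>0 < ln (real m)\<close> in auto)
  finally show ?thesis .
qed

theorem lemma5p1:
  shows "\<exists>N::nat. \<forall>n\<ge>N. \<forall>(HR::nat set set) (HB::nat set set) (\<pi>R::nat \<Rightarrow> nat) (\<pi>B::nat \<Rightarrow> nat).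
    let m = nat \<lceil>real n / (ln (real n)) ^ 8\<rceil>;
        p = 1 / (sqrt (real m) * (ln (real m)) ^ 2)
    in is_graph_on m HR \<and> is_graph_on m HB \<and>
       \<pi>R ` {1..n} \<subseteq> {1..m} \<and> \<pi>B ` {1..n} \<subseteq> {1..m} \<longrightarrow>
       ((max_degree_le m HR (2 * p * real m) \<and>
         (\<forall>x\<in>{1..m}. real (card {u\<in>{1..n}. \<pi>R u = x}) \<le> 2 * real n / real m))
          \<longrightarrow> real (card (cherry_closed_pairs n HR \<pi>R)) \<le> (real n)^2 / ln (real n)) \<and>
       ((max_degree_le m HB (2 * p * real m) \<and>
         (\<forall>x\<in>{1..m}. real (card {u\<in>{1..n}. \<pi>B u = x}) \<le> 2 * real n / real m))
          \<longrightarrow> real (card (cherry_closed_pairs n HB \<pi>B)) \<le> (real n)^2 / ln (real n))"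
proof -
  obtain N where N: "\<And>n. n \<ge> N \<Longrightarrow> 1 < real n / ln (real n) ^ 8 \<and>
      16 * ln (real n) \<le> ln (real n / ln (real n) ^ 8) ^ 4"
    using eventually_compose_filterlim[OF eventually_ln_bounds filterlim_real_sequentially]
    unfolding eventually_sequentially by blast
  show ?thesis
    unfolding Let_def
  proof (intro exI[of _ N] allI impI conjI; elim conjE)
  qed (rule card_cherry_closed_pairs_le_sq_div_ln[OF N[THEN conjunct1] N[THEN conjunct2] refl refl];
      assumption)+
qed

end
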